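(* Let $r \in \mathbb{N}$ with $r\ge 2$. (1) $k_{\mathsf{D}}(C_2^r) = \min \{k \in \mathbb{N} \colon \mathsf{D}_0(C_2^r) = \mathsf{D}_k(C_2^r) - 2k \}$. (2) If $B$ is a zero-sum sequence over $C_2^r$ with $\max\mathsf{L}(B)\le k_{\mathsf{D}}(C_2^r)$ and $|B| = \mathsf{D}_{k_{\mathsf{D}}(C_2^r)}(C_2^r)$, then $B$ is squarefree and $0$ does not occur in $B$. In particular, $k_{\mathsf{D}}(C_2^r) \le \lfloor (2^r-1)/3 \rfloor$.
   Context: $C_2^r$ is the elementary abelian $2$-group of rank $r$. A sequence over a finite abelian group $G$ is a finite unordered list of elements with repetitions; it is squarefree if no element occurs more than once; zero-sum means its terms sum to $0$; a minimal zero-sum sequence is a non-empty zero-sum sequence with no proper non-empty zero-sum subsequence; for a zero-sum sequence $B$, $\mathsf{L}(B)$ is the set of all $t$ such that $B$ is a product of $t$ minimal zero-sum sequences. $\mathsf{D}_k(G)$ is the smallest $\ell$ such that every sequence over $G$ of length at least $\ell$ has $k$ disjoint non-empty zero-sum subsequences. $\mathsf{D}_0(G)\in\mathbb{N}_0$ is the (known to exist) integer with $\mathsf{D}_k(G)=\mathsf{D}_0(G)+k\exp(G)$ for all sufficiently large $k$, and $k_{\mathsf{D}}(G)$ is the minimal $k_0\in\mathbb{N}$ with $\mathsf{D}_k(G)=\mathsf{D}_0(G)+k\exp(G)$ for all $k\ge k_0$. *)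

theory Defs
  imports Main "HOL-Library.Multiset"
begin

text \<open>The group C_2^r is modelled as the power set of {0..<r} with symmetric
difference as addition and the empty set as zero (i.e. F_2-vectors given by
their supports).\<close>

definition C2 :: "nat \<Rightarrow> nat set set" where
  "C2 r = Pow {..<r}"

definition seq_over :: "nat \<Rightarrow> nat set multiset \<Rightarrow> bool" where
  "seq_over r S \<longleftrightarrow> set_mset S \<subseteq> C2 r"

definition sigma :: "nat set multiset \<Rightarrow> nat set" where
  "sigma S = {i. odd (size (filter_mset (\<lambda>x. i \<in> x) S))}"

definition zero_sum :: "nat set multiset \<Rightarrow> bool" where
  "zero_sum S \<longleftrightarrow> sigma S = {}"

definition min_zero_sum :: "nat set multiset \<Rightarrow> bool" where
  "min_zero_sum S \<longleftrightarrow> S \<noteq> {#} \<and> zero_sum S \<and>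
     (\<forall>T. T \<subseteq># S \<and> T \<noteq> {#} \<and> zero_sum T \<longrightarrow> T = S)"

definition Lset :: "nat set multiset \<Rightarrow> nat set" where
  "Lset B = {t. \<exists>F :: nat set multiset multiset.
      size F = t \<and> (\<forall>A\<in>#F. min_zero_sum A) \<and> \<Sum>\<^sub># F = B}"

definition squarefree_seq :: "'a multiset \<Rightarrow> bool" where
  "squarefree_seq S \<longleftrightarrow> (\<forall>x. count S x \<le> 1)"

definition Dk :: "nat \<Rightarrow> nat \<Rightarrow> nat" where
  "Dk r k = (LEAST l. \<forall>S. seq_over r S \<and> size S \<ge> l \<longrightarrow>
      (\<exists>F :: nat set multiset multiset. size F = k \<and>
         (\<forall>A\<in>#F. A \<noteq> {#} \<and> zero_sum A) \<and> \<Sum>\<^sub># F \<subseteq># S))"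

text \<open>exp(C_2^r) = 2 for r \<ge> 1.\<close>
definition D0 :: "nat \<Rightarrow> nat" where
  "D0 r = (THE d. \<exists>k0. \<forall>k\<ge>k0. Dk r k = d + 2 * k)"

definition kD :: "nat \<Rightarrow> nat" where
  "kD r = (LEAST k0. k0 \<ge> 1 \<and> (\<forall>k\<ge>k0. Dk r k = D0 r + 2 * k))"

end

theory Submission
  imports Defs
begin

text \<open>Adjoining a pair g, g (g \<noteq> 0) to a sequence without k disjoint zero-sum subsequences
  yields one without k + 1 of them, so Dk r (k + 1) \<ge> Dk r k + 2; hence Dk r k - 2k is
  non-decreasing and bounded, stabilises at D0 r, and kD r is the first k \<ge> 1 with
  Dk r k = D0 r + 2k. At kD r the step from kD r - 1 exceeds 2. If a zero-sum B of length
  Dk r (kD r) has no factorization longer than kD r, then deleting an atom A leaves a sequence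
  with no factorization longer than kD r - 1, so |B| - |A| \<le> Dk r (kD r - 1) and |A| \<ge> 3.
  The atoms of length at most 2 are 0 and g g, so B is squarefree and zero-free.
  Completing a longest sequence without kD r disjoint zero-sum subsequences by its sum gives
  such a B; it has at most 2^r - 1 terms and a factorization into at least kD r atoms, each of
  length \<ge> 3.\<close>

section \<open>Sums in C_2^r\<close>

lemma sigma_plus: "sigma (A + B) = (sigma A - sigma B) \<union> (sigma B - sigma A)"
  unfolding sigma_def by auto

lemma sigma_empty [simp]: "sigma {#} = {}"
  unfolding sigma_def by auto

lemma sigma_single [simp]: "sigma {#x#} = x"
  unfolding sigma_def by auto

lemma sigma_add_mset: "sigma (add_mset x A) = (x - sigma A) \<union> (sigma A - x)"
  using sigma_plus[of "{#x#}" A] by simp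

lemma sigma_double [simp]: "sigma {#x, x#} = {}"
  by (simp add: sigma_add_mset)

lemma mem_sigma_imp_mem_term: "i \<in> sigma S \<Longrightarrow> \<exists>x\<in>#S. i \<in> x"
  unfolding sigma_def
  by (metis (mono_tags) filter_mset_eq_mempty_iff mem_Collect_eq odd_pos size_empty less_irrefl)

lemma sigma_in_C2: "seq_over r S \<Longrightarrow> sigma S \<in> C2 r"
  unfolding seq_over_def C2_def by (auto dest: mem_sigma_imp_mem_term)

lemma zero_sum_plus: "zero_sum A \<Longrightarrow> zero_sum B \<Longrightarrow> zero_sum (A + B)"
  unfolding zero_sum_def by (simp add: sigma_plus)

lemma zero_sum_minus:
  assumes "zero_sum B" "zero_sum A" "A \<subseteq># B"
  shows "zero_sum (B - A)"
proof -
  have "sigma B = (sigma A - sigma (B - A)) \<union> (sigma (B - A) - sigma A)"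
    using sigma_plus[of A "B - A"] assms(3) by simp
  with assms(1,2) show ?thesis
    unfolding zero_sum_def by auto
qed

lemma zero_sum_sum_mset: "\<forall>A\<in>#F. zero_sum A \<Longrightarrow> zero_sum (\<Sum>\<^sub># F)"
  by (induction F) (auto simp: zero_sum_plus, simp add: zero_sum_def)

lemma sigma_minus_single: "g \<in># A \<Longrightarrow> zero_sum A \<Longrightarrow> sigma (A - {#g#}) = g"
  using sigma_add_mset[of g "A - {#g#}"] unfolding zero_sum_def by (auto simp: insert_DiffM)

lemma short_zero_sum_cases:
  assumes "zero_sum A" "A \<noteq> {#}" "size A \<le> 2"
  shows "A = {#{}#} \<or> (\<exists>g. A = {#g, g#})"
proof -
  obtain x A' where A: "A = add_mset x A'"
    using assms(2) by (meson multi_nonempty_split)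
  then have "size A' \<le> 1" using assms(3) by simp
  show ?thesis
  proof (cases "A' = {#}")
    case True
    then show ?thesis using assms(1) A unfolding zero_sum_def by simp
  next
    case False
    then obtain y where "A' = {#y#}"
      using \<open>size A' \<le> 1\<close>
      by (metis One_nat_def le_SucE le_zero_eq size_1_singleton_mset size_eq_0_iff_empty)
    then show ?thesis using assms(1) A unfolding zero_sum_def by (auto simp: sigma_add_mset)
  qed
qed

lemma min_zero_sum_zero: "min_zero_sum {#{}#}"
  unfolding min_zero_sum_def zero_sum_def
  by (auto intro: nonempty_subseteq_mset_eq_single)

lemma min_zero_sum_double:
  assumes "g \<noteq> {}"
  shows "min_zero_sum {#g, g#}"
  unfolding min_zero_sum_def
proof (intro conjI allI impI)
  show "zero_sum {#g, g#}" by (simp add: zero_sum_def)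
  fix T assume T: "T \<subseteq># {#g, g#} \<and> T \<noteq> {#} \<and> zero_sum T"
  then obtain x where x: "x \<in># T" by blast
  then have "x = g" using T by (auto dest: mset_subset_eqD)
  then obtain T' where T': "T = add_mset g T'"
    using x by (blast dest: multi_member_split)
  have "T' \<noteq> {#}" using T T' assms unfolding zero_sum_def by auto
  moreover have "T' \<subseteq># {#g#}" using T T' by (simp add: mset_subset_eq_add_mset_cancel)
  ultimately show "T = {#g, g#}"
    using T' by (simp add: nonempty_subseteq_mset_eq_single)
qed simp

section \<open>Disjoint zero-sum subsequences and D_k\<close>

definition has_disjoint_zero_sums :: "nat \<Rightarrow> nat set multiset \<Rightarrow> bool" where
  "has_disjoint_zero_sums k S \<longleftrightarrow> (\<exists>F :: nat set multiset multiset. size F = k \<and>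
     (\<forall>A\<in>#F. A \<noteq> {#} \<and> zero_sum A) \<and> \<Sum>\<^sub># F \<subseteq># S)"

lemma has_disjoint_zero_sumsI:
  "\<forall>A\<in>#F. A \<noteq> {#} \<and> zero_sum A \<Longrightarrow> \<Sum>\<^sub># F \<subseteq># S \<Longrightarrow> has_disjoint_zero_sums (size F) S"
  unfolding has_disjoint_zero_sums_def by blast

lemma has_disjoint_zero_sums_submset:
  assumes "F' \<subseteq># F" "\<forall>A\<in>#F. A \<noteq> {#} \<and> zero_sum A" "\<Sum>\<^sub># F \<subseteq># S"
  shows "has_disjoint_zero_sums (size F') S"
proof (rule has_disjoint_zero_sumsI)
  show "\<forall>A\<in>#F'. A \<noteq> {#} \<and> zero_sum A" using assms(1,2) by (auto dest: mset_subset_eqD)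
  have "\<Sum>\<^sub># F' \<subseteq># \<Sum>\<^sub># F" using assms(1) by (metis subset_mset.le_iff_add sum_mset.union)
  then show "\<Sum>\<^sub># F' \<subseteq># S" using assms(3) by (rule subset_mset.order_trans)
qed

lemma has_disjoint_zero_sums_Suc_imp:
  assumes "has_disjoint_zero_sums (Suc k) S"
  shows "has_disjoint_zero_sums k S"
proof -
  obtain F where F: "size F = Suc k" "\<forall>A\<in>#F. A \<noteq> {#} \<and> zero_sum A" "\<Sum>\<^sub># F \<subseteq># S"
    using assms unfolding has_disjoint_zero_sums_def by blast
  then obtain A F' where "F = add_mset A F'" by (metis size_eq_Suc_imp_eq_union)
  then show ?thesis
    using has_disjoint_zero_sums_submset[of F' F S] F by simp
qed

lemma has_disjoint_zero_sums_le:
  "has_disjoint_zero_sums k S \<Longrightarrow> j \<le> k \<Longrightarrow> has_disjoint_zero_sums j S"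
  by (induction k) (auto simp: le_Suc_eq dest: has_disjoint_zero_sums_Suc_imp)

lemma size_eq_card_set_mset_if_squarefree:
  assumes "squarefree_seq S"
  shows "size S = card (set_mset S)"
proof -
  have "S = mset_set (set_mset S)"
    using assms unfolding squarefree_seq_def
    by (intro multiset_eqI) (metis count_greater_eq_one_iff count_mset_set(1,3) finite_set_mset
        not_in_iff order_class.order_eq_iff)
  then show ?thesis by (metis size_mset_set)
qed

lemma not_squarefree_if_size_gt:
  assumes "set_mset S \<subseteq> X" "finite X" "card X < size S"
  shows "\<not> squarefree_seq S"
  using size_eq_card_set_mset_if_squarefree[of S] card_mono[OF assms(2,1)] assms(3) by linarith

lemma card_C2: "card (C2 r) = 2 ^ r"
  unfolding C2_def by (simp add: card_Pow)

text \<open>Pigeonhole: every repeated element {#x, x#} is a zero-sum subsequence.\<close>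

lemma has_disjoint_zero_sums_if_long:
  "seq_over r S \<Longrightarrow> 2 * k + 2 ^ r \<le> size S \<Longrightarrow> has_disjoint_zero_sums k S"
proof (induction k arbitrary: S)
  case 0
  show ?case unfolding has_disjoint_zero_sums_def by (intro exI[of _ "{#}"]) simp
next
  case (Suc k)
  have "\<not> squarefree_seq S"
    using Suc.prems card_C2[of r] unfolding seq_over_def
    by (intro not_squarefree_if_size_gt[of _ "C2 r"]) (auto simp: C2_def)
  then obtain x where "2 \<le> count S x"
    unfolding squarefree_seq_def by (metis not_less_eq_eq one_add_one plus_1_eq_Suc)
  then have "{#x, x#} \<subseteq># S" by (auto simp: subseteq_mset_def)
  then obtain S' where S: "S = {#x, x#} + S'" by (metis subset_mset.le_iff_add)
  have "has_disjoint_zero_sums k S'"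
    using Suc.prems S by (intro Suc.IH) (auto simp: seq_over_def)
  then obtain F where F: "size F = k" "\<forall>A\<in>#F. A \<noteq> {#} \<and> zero_sum A" "\<Sum>\<^sub># F \<subseteq># S'"
    unfolding has_disjoint_zero_sums_def by blast
  have "has_disjoint_zero_sums (size (add_mset {#x, x#} F)) S"
    using F S by (intro has_disjoint_zero_sumsI) (auto simp: zero_sum_def)
  then show ?case using F(1) by simp
qed

lemma not_zero_sum_submset_singletons:
  assumes "finite I" "A \<subseteq># mset_set ((\<lambda>i. {i}) ` I)" "A \<noteq> {#}"
  shows "\<not> zero_sum A"
proof
  assume zs: "zero_sum A"
  obtain x where x: "x \<in># A" using assms(3) by blast
  then obtain i where i: "x = {i}" "i \<in> I" using mset_subset_eqD[OF assms(2)] assms(1) by auto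
  have "{x \<in> (\<lambda>i. {i}) ` I. i \<in> x} = {{i}}" using i(2) by auto
  then have "filter_mset ((\<in>) i) (mset_set ((\<lambda>i. {i}) ` I)) = {#{i}#}"
    using assms(1) by simp
  then have "filter_mset ((\<in>) i) A \<subseteq># {#{i}#}"
    using multiset_filter_mono[OF assms(2), of "(\<in>) i"] by simp
  then have "filter_mset ((\<in>) i) A = {#{i}#}"
    using x i(1) by (intro nonempty_subseteq_mset_eq_single) auto
  then have "i \<in> sigma A" unfolding sigma_def by simp
  then show False using zs unfolding zero_sum_def by simp
qed

lemma Dk_eq_Least:
  "Dk r k = (LEAST l. \<forall>S. seq_over r S \<and> l \<le> size S \<longrightarrow> has_disjoint_zero_sums k S)"
  unfolding Dk_def has_disjoint_zero_sums_def by simp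

lemma Dk_le: "Dk r k \<le> 2 * k + 2 ^ r"
  unfolding Dk_eq_Least by (rule Least_le) (use has_disjoint_zero_sums_if_long in blast)

lemma has_disjoint_zero_sums_if_Dk_le:
  assumes "seq_over r S" "Dk r k \<le> size S"
  shows "has_disjoint_zero_sums k S"
proof -
  have "\<forall>S. seq_over r S \<and> Dk r k \<le> size S \<longrightarrow> has_disjoint_zero_sums k S"
    unfolding Dk_eq_Least by (rule LeastI) (use has_disjoint_zero_sums_if_long in blast)
  with assms show ?thesis by blast
qed

lemma Dk_gt_if_not_has_disjoint_zero_sums:
  "seq_over r S \<Longrightarrow> \<not> has_disjoint_zero_sums k S \<Longrightarrow> size S < Dk r k"
  using has_disjoint_zero_sums_if_Dk_le not_le by blast

lemma Dk_extremal_seq: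
  assumes "0 < Dk r k"
  obtains S where "seq_over r S" "size S = Dk r k - 1" "\<not> has_disjoint_zero_sums k S"
proof -
  have "\<not> (\<forall>S. seq_over r S \<and> Dk r k - 1 \<le> size S \<longrightarrow> has_disjoint_zero_sums k S)"
    using assms unfolding Dk_eq_Least by (intro not_less_Least) simp
  then obtain S where "seq_over r S" "Dk r k - 1 \<le> size S" "\<not> has_disjoint_zero_sums k S"
    by blast
  with Dk_gt_if_not_has_disjoint_zero_sums[of r S k] show thesis
    by (intro that) auto
qed

lemma Dk_0 [simp]: "Dk r 0 = 0"
  unfolding Dk_eq_Least by (rule Least_eq_0) (auto simp: has_disjoint_zero_sums_def)

lemma Dk_1_gt: "r < Dk r 1"
proof -
  let ?S = "mset_set ((\<lambda>i. {i}) ` {..<r})"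
  have "seq_over r ?S" unfolding seq_over_def C2_def by auto
  moreover have "\<not> has_disjoint_zero_sums 1 ?S"
  proof
    assume "has_disjoint_zero_sums 1 ?S"
    then obtain F where F: "size F = 1" "\<forall>A\<in>#F. A \<noteq> {#} \<and> zero_sum A" "\<Sum>\<^sub># F \<subseteq># ?S"
      unfolding has_disjoint_zero_sums_def by blast
    then obtain A where "F = {#A#}" by (metis size_1_singleton_mset)
    then show False using F not_zero_sum_submset_singletons[of "{..<r}" A] by simp
  qed
  ultimately have "size ?S < Dk r 1" by (rule Dk_gt_if_not_has_disjoint_zero_sums)
  then show ?thesis by (simp add: card_image)
qed

lemma sum_mset_subset_add_mset_cases:
  assumes "\<Sum>\<^sub># F \<subseteq># add_mset g S"
  obtains "\<Sum>\<^sub># F \<subseteq># S"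
  | A where "A \<in># F" "g \<in># A" "\<Sum>\<^sub># (F - {#A#}) + (A - {#g#}) \<subseteq># S"
proof (cases "g \<in># \<Sum>\<^sub># F")
  case False
  then have "\<Sum>\<^sub># F \<subseteq># S"
    using assms by (metis diff_single_trivial subset_eq_diff_conv add_mset_add_single)
  then show thesis by (rule that(1))
next
  case True
  then obtain A where A: "A \<in># F" "g \<in># A" by blast
  have "\<Sum>\<^sub># F = add_mset g (\<Sum>\<^sub># (F - {#A#}) + (A - {#g#}))"
    using A by (metis sum_mset.remove insert_DiffM union_mset_add_mset_right add.commute)
  then have "\<Sum>\<^sub># (F - {#A#}) + (A - {#g#}) \<subseteq># S"
    using assms by (metis mset_subset_eq_add_mset_cancel)
  with A show thesis by (rule that(2))
qed

lemma has_disjoint_zero_sums_add_mset_Suc: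
  assumes "has_disjoint_zero_sums (Suc k) (add_mset g S)"
  shows "has_disjoint_zero_sums k S"
proof -
  obtain F where F: "size F = Suc k" "\<forall>A\<in>#F. A \<noteq> {#} \<and> zero_sum A"
    "\<Sum>\<^sub># F \<subseteq># add_mset g S"
    using assms unfolding has_disjoint_zero_sums_def by blast
  from F(3) show ?thesis
  proof (cases rule: sum_mset_subset_add_mset_cases)
    case 1
    then show ?thesis
      using F has_disjoint_zero_sumsI has_disjoint_zero_sums_Suc_imp by metis
  next
    case (2 A)
    have "\<Sum>\<^sub># (F - {#A#}) \<subseteq># S"
      using subset_mset.order_trans[OF mset_subset_eq_add_left 2(3)] .
    then have "has_disjoint_zero_sums (size (F - {#A#})) S"
      using F(2) by (intro has_disjoint_zero_sumsI) (auto dest: in_diffD)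
    then show ?thesis using F(1) 2(1) by (simp add: size_Diff_singleton)
  qed
qed

text \<open>The heart of D_(k+1) \<ge> D_k + 2: a part U with sum g, packed next to F inside S + {#g#},
  either avoids the extra copy of g, or the part that uses it loses it and merges with U
  into a zero-sum part, since both remainders sum to g.\<close>

lemma has_disjoint_zero_sums_absorb_part:
  assumes U: "U \<noteq> {#}" "sigma U = g"
    and F: "\<forall>B\<in>#F. B \<noteq> {#} \<and> zero_sum B" "\<Sum>\<^sub># (add_mset U F) \<subseteq># add_mset g S"
  shows "has_disjoint_zero_sums (size F) S"
  using F(2)
proof (cases rule: sum_mset_subset_add_mset_cases)
  case 1
  then have "\<Sum>\<^sub># F \<subseteq># S"
    by (metis sum_mset.add_mset mset_subset_eq_add_right subset_mset.order_trans)
  then show ?thesis using F(1) by (rule has_disjoint_zero_sumsI[rotated])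
next
  case (2 C)
  show ?thesis
  proof (cases "C \<in># F")
    case True
    define F' where "F' = F - {#C#}"
    have "sigma (C - {#g#}) = g" using 2(2) True F(1) by (simp add: sigma_minus_single)
    then have "zero_sum (U + (C - {#g#}))"
      unfolding zero_sum_def by (simp add: sigma_plus U(2))
    moreover have "add_mset U F - {#C#} = add_mset U F'" unfolding F'_def using True by simp
    ultimately have "has_disjoint_zero_sums (size (add_mset (U + (C - {#g#})) F')) S"
      using 2(3) F(1) U(1) unfolding F'_def
      by (intro has_disjoint_zero_sumsI) (auto simp: ac_simps dest: in_diffD)
    moreover have "0 < size F" using True by (metis gr0I size_eq_0_iff_empty empty_iff set_mset_empty)
    ultimately show ?thesis unfolding F'_def by (simp add: size_Diff_singleton True)
  next
    case False
    then have "C = U" using 2(1) by simp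
    then have "\<Sum>\<^sub># F \<subseteq># S"
      using subset_mset.order_trans[OF mset_subset_eq_add_left 2(3)] by simp
    then show ?thesis using F(1) by (rule has_disjoint_zero_sumsI[rotated])
  qed
qed

lemma has_disjoint_zero_sums_add_double:
  assumes g: "g \<noteq> {}" and packing: "has_disjoint_zero_sums (Suc k) (add_mset g (add_mset g S))"
  shows "has_disjoint_zero_sums k S"
proof -
  obtain F where F: "size F = Suc k" "\<forall>A\<in>#F. A \<noteq> {#} \<and> zero_sum A"
    "\<Sum>\<^sub># F \<subseteq># add_mset g (add_mset g S)"
    using packing unfolding has_disjoint_zero_sums_def by blast
  from F(3) show ?thesis
  proof (cases rule: sum_mset_subset_add_mset_cases)
    case 1
    then show ?thesis
      using F has_disjoint_zero_sumsI has_disjoint_zero_sums_add_mset_Suc by metis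
  next
    case (2 A)
    have sum_U: "sigma (A - {#g#}) = g" using 2 F(2) by (simp add: sigma_minus_single)
    then have "A - {#g#} \<noteq> {#}" using g by auto
    moreover have "\<forall>B\<in>#F - {#A#}. B \<noteq> {#} \<and> zero_sum B" using F(2) by (auto dest: in_diffD)
    moreover have "\<Sum>\<^sub># (add_mset (A - {#g#}) (F - {#A#})) \<subseteq># add_mset g S"
      using 2(3) by (simp add: add.commute)
    ultimately have "has_disjoint_zero_sums (size (F - {#A#})) S"
      using sum_U by (intro has_disjoint_zero_sums_absorb_part)
    then show ?thesis using F(1) 2(1) by (simp add: size_Diff_singleton)
  qed
qed

lemma mult_size_le_size_sum_mset:
  fixes F :: "'a multiset multiset"
  shows "\<forall>A\<in>#F. m \<le> size A \<Longrightarrow> m * size F \<le> size (\<Sum>\<^sub># F)"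
  by (induction F) auto

lemma size_le_size_sum_mset:
  fixes F :: "'a multiset multiset"
  shows "\<forall>A\<in>#F. A \<noteq> {#} \<Longrightarrow> size F \<le> size (\<Sum>\<^sub># F)"
  using mult_size_le_size_sum_mset[of F 1] by (simp add: Suc_le_eq nonempty_has_size)

lemma has_disjoint_zero_sums_imp_le_size: "has_disjoint_zero_sums k S \<Longrightarrow> k \<le> size S"
  unfolding has_disjoint_zero_sums_def
proof (elim exE conjE)
  fix F :: "nat set multiset multiset"
  assume "size F = k" "\<forall>A\<in>#F. A \<noteq> {#} \<and> zero_sum A" "\<Sum>\<^sub># F \<subseteq># S"
  then show "k \<le> size S"
    using size_le_size_sum_mset[of F] size_mset_mono[of "\<Sum>\<^sub># F" S] by auto
qed

lemma Dk_Suc_ge: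
  assumes "1 \<le> r"
  shows "Dk r k + 2 \<le> Dk r (Suc k)"
proof (cases k)
  case 0
  then show ?thesis using Dk_1_gt[of r] assms by simp
next
  case (Suc j)
  have "\<not> has_disjoint_zero_sums k {#}"
    using Suc has_disjoint_zero_sums_imp_le_size[of k "{#}"] by auto
  moreover have "seq_over r {#}" by (simp add: seq_over_def)
  ultimately have "0 < Dk r k"
    using Dk_gt_if_not_has_disjoint_zero_sums[of r "{#}" k] by simp
  then obtain S where S: "seq_over r S" "size S = Dk r k - 1" "\<not> has_disjoint_zero_sums k S"
    by (rule Dk_extremal_seq)
  have g: "{0} \<in> C2 r" using assms unfolding C2_def by auto
  have "\<not> has_disjoint_zero_sums (Suc k) (add_mset {0} (add_mset {0} S))"
    using has_disjoint_zero_sums_add_double[of "{0}" k S] S(3) by auto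
  moreover have "seq_over r (add_mset {0} (add_mset {0} S))"
    using S(1) g by (simp add: seq_over_def)
  ultimately have "size (add_mset {0} (add_mset {0} S)) < Dk r (Suc k)"
    by (intro Dk_gt_if_not_has_disjoint_zero_sums)
  then show ?thesis using S(2) \<open>0 < Dk r k\<close> by simp
qed

lemma Dk_add_le:
  assumes "1 \<le> r" "k \<le> k'"
  shows "Dk r k + 2 * (k' - k) \<le> Dk r k'"
  using assms(2)
proof (induction k' rule: dec_induct)
  case (step n)
  have "Dk r k + 2 * (Suc n - k) = Dk r k + 2 * (n - k) + 2" using step(1) by simp
  also have "\<dots> \<le> Dk r (Suc n)" using step(3) Dk_Suc_ge[OF assms(1), of n] by linarith
  finally show ?case .
qed simp

lemma Dk_ge: "1 \<le> r \<Longrightarrow> 2 * k \<le> Dk r k"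
  using Dk_add_le[of r 0 k] by simp

section \<open>The constants D_0 and k_D\<close>

lemma Dk_eventually_linear:
  assumes "1 \<le> r"
  obtains d k0 where "\<forall>k. Dk r k \<le> d + 2 * k" "\<forall>k\<ge>k0. Dk r k = d + 2 * k"
proof -
  define f where "f k = Dk r k - 2 * k" for k
  have f_mono: "f k \<le> f k'" if "k \<le> k'" for k k'
    using Dk_add_le[OF assms that] Dk_ge[OF assms, of k] Dk_ge[OF assms, of k'] that
    unfolding f_def by linarith
  have "f k \<le> 2 ^ r" for k using Dk_le[of r k] unfolding f_def by linarith
  then have fin: "finite (range f)" unfolding finite_nat_set_iff_bounded_le by blast
  have "Max (range f) \<in> range f" using fin by (intro Max_in) auto
  then obtain k0 where k0: "f k0 = Max (range f)" by auto
  have f_le: "f k \<le> f k0" for k unfolding k0 using fin by (intro Max_ge) auto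
  show thesis
  proof (rule that)
    show "\<forall>k. Dk r k \<le> f k0 + 2 * k"
      using f_le unfolding f_def by (simp add: le_diff_conv)
    show "\<forall>k\<ge>k0. Dk r k = f k0 + 2 * k"
    proof (intro allI impI)
      fix k assume "k0 \<le> k"
      then have "f k = f k0" using f_mono f_le by (simp add: le_antisym)
      then show "Dk r k = f k0 + 2 * k" using Dk_ge[OF assms, of k] unfolding f_def by linarith
    qed
  qed
qed

lemma D0_eqI: "\<forall>k\<ge>k0. Dk r k = d + 2 * k \<Longrightarrow> D0 r = d"
  unfolding D0_def
proof (rule the_equality)
  fix d' assume "\<exists>k1. \<forall>k\<ge>k1. Dk r k = d' + 2 * k"
  then obtain k1 where "\<forall>k\<ge>k1. Dk r k = d' + 2 * k" by blast
  then have "Dk r (max k0 k1) = d' + 2 * max k0 k1" by simp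
  moreover assume "\<forall>k\<ge>k0. Dk r k = d + 2 * k"
  then have "Dk r (max k0 k1) = d + 2 * max k0 k1" by simp
  ultimately show "d' = d" by simp
qed blast

lemma Dk_le_D0:
  assumes "1 \<le> r"
  shows "Dk r k \<le> D0 r + 2 * k"
proof -
  obtain d k0 where "\<forall>k. Dk r k \<le> d + 2 * k" "\<forall>k\<ge>k0. Dk r k = d + 2 * k"
    by (rule Dk_eventually_linear[OF assms])
  then show ?thesis using D0_eqI[of k0 r d] by simp
qed

lemma Dk_eq_D0_propagate:
  assumes "1 \<le> r" "Dk r k = D0 r + 2 * k" "k \<le> k'"
  shows "Dk r k' = D0 r + 2 * k'"
  using Dk_add_le[OF assms(1,3)] Dk_le_D0[OF assms(1), of k'] assms(2,3) by simp

lemma kD_eq_Least: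
  assumes "1 \<le> r"
  shows "kD r = (LEAST k. 1 \<le> k \<and> Dk r k = D0 r + 2 * k)"
proof -
  have "(\<lambda>k0. 1 \<le> k0 \<and> (\<forall>k\<ge>k0. Dk r k = D0 r + 2 * k))
      = (\<lambda>k. 1 \<le> k \<and> Dk r k = D0 r + 2 * k)"
    using Dk_eq_D0_propagate[OF assms] by (intro ext) blast
  then show ?thesis unfolding kD_def by simp
qed

lemma Dk_eventually_D0:
  assumes "1 \<le> r"
  obtains k0 where "\<forall>k\<ge>k0. Dk r k = D0 r + 2 * k"
proof -
  obtain d k0 where "\<forall>k. Dk r k \<le> d + 2 * k" and eq: "\<forall>k\<ge>k0. Dk r k = d + 2 * k"
    by (rule Dk_eventually_linear[OF assms])
  moreover have "D0 r = d" by (rule D0_eqI[OF eq])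
  ultimately show thesis by (intro that[of k0]) simp
qed

lemma kD_ge_1_and_Dk_kD:
  assumes "1 \<le> r"
  shows "1 \<le> kD r" "Dk r (kD r) = D0 r + 2 * kD r"
proof -
  obtain k0 where "\<forall>k\<ge>k0. Dk r k = D0 r + 2 * k" by (rule Dk_eventually_D0[OF assms])
  then have "1 \<le> max k0 1 \<and> Dk r (max k0 1) = D0 r + 2 * max k0 1" by simp
  then have "1 \<le> kD r \<and> Dk r (kD r) = D0 r + 2 * kD r"
    unfolding kD_eq_Least[OF assms] by (rule LeastI)
  then show "1 \<le> kD r" "Dk r (kD r) = D0 r + 2 * kD r" by auto
qed

lemma Dk_lt_D0_below_kD:
  assumes "1 \<le> r" "1 \<le> k" "k < kD r"
  shows "Dk r k < D0 r + 2 * k"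
proof -
  have "Dk r k \<noteq> D0 r + 2 * k"
    using not_less_Least[of k] assms(2,3) unfolding kD_eq_Least[OF assms(1)] by blast
  then show ?thesis using Dk_le_D0[OF assms(1), of k] by simp
qed

lemma Dk_kD_jump:
  assumes "2 \<le> r"
  shows "Dk r (kD r - 1) + 2 < Dk r (kD r)"
proof (cases "kD r = 1")
  case True
  then show ?thesis using Dk_1_gt[of r] assms by simp
next
  case False
  then have "1 \<le> kD r - 1" "kD r - 1 < kD r" using kD_ge_1_and_Dk_kD(1)[of r] assms by auto
  then have "Dk r (kD r - 1) < D0 r + 2 * (kD r - 1)"
    using assms by (intro Dk_lt_D0_below_kD) auto
  then show ?thesis using kD_ge_1_and_Dk_kD[of r] assms by simp
qed

section \<open>Sets of lengths\<close>

lemma min_zero_sumD: "min_zero_sum A \<Longrightarrow> A \<noteq> {#} \<and> zero_sum A"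
  unfolding min_zero_sum_def by blast

lemma min_zero_sum_factorization:
  assumes "zero_sum A"
  obtains F where "\<forall>X\<in>#F. min_zero_sum X" "\<Sum>\<^sub># F = A" "A \<noteq> {#} \<Longrightarrow> 1 \<le> size F"
  using assms
proof (induction "size A" arbitrary: A thesis rule: less_induct)
  case less
  show ?case
  proof (cases "A = {#} \<or> min_zero_sum A")
    case True
    then show ?thesis
    proof
      assume "A = {#}"
      then show ?thesis by (intro less.prems(1)[of "{#}"]) auto
    next
      assume "min_zero_sum A"
      then show ?thesis by (intro less.prems(1)[of "{#A#}"]) auto
    qed
  next
    case False
    then obtain T where T: "T \<subseteq># A" "T \<noteq> {#}" "zero_sum T" "T \<noteq> A"
      using less.prems(2) unfolding min_zero_sum_def by blast
    then have "T \<subset># A" by (simp add: subset_mset.le_neq_trans)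
    then have size_T: "size T < size A" by (rule mset_subset_size)
    have size_rest: "size (A - T) < size A"
      using T(2) size_mset_mono[OF T(1)]
      by (simp add: size_Diff_submset[OF T(1)] nonempty_has_size)
    obtain F1 where F1: "\<forall>X\<in>#F1. min_zero_sum X" "\<Sum>\<^sub># F1 = T" "1 \<le> size F1"
      using less.hyps[OF size_T _ T(3)] T(2) by metis
    obtain F2 where F2: "\<forall>X\<in>#F2. min_zero_sum X" "\<Sum>\<^sub># F2 = A - T"
      using less.hyps[OF size_rest _ zero_sum_minus[OF less.prems(2) T(3,1)]] by metis
    show ?thesis
      using F1 F2 T(1) by (intro less.prems(1)[of "F1 + F2"]) auto
  qed
qed

lemma Lset_refine:
  assumes "\<forall>A\<in>#G. A \<noteq> {#} \<and> zero_sum A"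
  shows "\<exists>t\<in>Lset (\<Sum>\<^sub># G). size G \<le> t"
  using assms
proof (induction G)
  case empty
  then show ?case unfolding Lset_def by (intro bexI[of _ 0]) (auto intro: exI[of _ "{#}"])
next
  case (add A G)
  then obtain F where F: "\<forall>X\<in>#F. min_zero_sum X" "\<Sum>\<^sub># F = \<Sum>\<^sub># G" "size G \<le> size F"
    unfolding Lset_def by auto
  obtain F1 where F1: "\<forall>X\<in>#F1. min_zero_sum X" "\<Sum>\<^sub># F1 = A" "1 \<le> size F1"
    using min_zero_sum_factorization[of A] add.prems by auto
  show ?case
    using F F1 unfolding Lset_def
    by (intro bexI[of _ "size (F1 + F)"]) (auto intro!: exI[of _ "F1 + F"])
qed

lemma Lset_le_size: "t \<in> Lset B \<Longrightarrow> t \<le> size B"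
  unfolding Lset_def using size_le_size_sum_mset min_zero_sumD by blast

lemma finite_Lset: "finite (Lset B)"
  unfolding finite_nat_set_iff_bounded_le using Lset_le_size by blast

lemma Suc_mem_Lset_plus:
  assumes "min_zero_sum A" "t \<in> Lset B"
  shows "Suc t \<in> Lset (A + B)"
proof -
  obtain F where "size F = t" "\<forall>X\<in>#F. min_zero_sum X" "\<Sum>\<^sub># F = B"
    using assms(2) unfolding Lset_def by blast
  then show ?thesis
    using assms(1) unfolding Lset_def by (intro CollectI exI[of _ "add_mset A F"]) auto
qed

text \<open>If all factorizations of B have length at most k, then B minus one of its terms
  has no k disjoint zero-sum subsequences: otherwise those k, together with the zero-sum
  remainder (which contains the removed term), refine to a factorization of length > k.\<close>

lemma size_le_Dk_if_Lset_le:
  assumes "seq_over r B" "zero_sum B" "\<forall>t\<in>Lset B. t \<le> k"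
  shows "size B \<le> Dk r k"
proof (rule ccontr)
  assume long: "\<not> size B \<le> Dk r k"
  then have "B \<noteq> {#}" by auto
  then obtain g where g: "g \<in># B" by blast
  have "seq_over r (B - {#g#})" using assms(1) unfolding seq_over_def by (auto dest: in_diffD)
  moreover have "Dk r k \<le> size (B - {#g#})" using long g by (simp add: size_Diff_singleton)
  ultimately have "has_disjoint_zero_sums k (B - {#g#})" by (rule has_disjoint_zero_sums_if_Dk_le)
  then obtain F where F: "size F = k" "\<forall>A\<in>#F. A \<noteq> {#} \<and> zero_sum A" "\<Sum>\<^sub># F \<subseteq># B - {#g#}"
    unfolding has_disjoint_zero_sums_def by blast
  define R where "R = B - \<Sum>\<^sub># F"
  have FB: "\<Sum>\<^sub># F \<subseteq># B" using F(3) by (meson diff_subset_eq_self subset_mset.order_trans)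
  have "count (\<Sum>\<^sub># F) g \<le> count B g - 1" using mset_subset_eq_count[OF F(3), of g] by simp
  moreover have "0 < count B g" using g by simp
  ultimately have "count (\<Sum>\<^sub># F) g < count B g" by linarith
  then have "g \<in># R" unfolding R_def by (simp add: in_diff_count)
  then have "R \<noteq> {#}" by auto
  moreover have "zero_sum R"
    unfolding R_def using zero_sum_minus[OF assms(2) zero_sum_sum_mset FB] F(2) by blast
  ultimately have "\<forall>A\<in>#add_mset R F. A \<noteq> {#} \<and> zero_sum A" using F(2) by auto
  moreover have "\<Sum>\<^sub># (add_mset R F) = B" unfolding R_def using FB by simp
  ultimately obtain t where "t \<in> Lset B" "size (add_mset R F) \<le> t"
    using Lset_refine[of "add_mset R F"] by auto
  then show False using assms(3) F(1) by fastforce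
qed

lemma has_disjoint_zero_sums_if_mem_Lset_add_mset:
  assumes "t \<in> Lset (add_mset y S)"
  shows "has_disjoint_zero_sums (t - 1) S"
proof -
  obtain F where F: "size F = t" "\<forall>A\<in>#F. min_zero_sum A" "\<Sum>\<^sub># F = add_mset y S"
    using assms unfolding Lset_def by blast
  have "y \<in># \<Sum>\<^sub># F" using F(3) by simp
  then obtain A where A: "A \<in># F" "y \<in># A" by blast
  have "add_mset y S = A + \<Sum>\<^sub># (F - {#A#})" using F(3) A(1) by (simp add: sum_mset.remove)
  also have "\<dots> = add_mset y ((A - {#y#}) + \<Sum>\<^sub># (F - {#A#}))" using A(2) by simp
  finally have "\<Sum>\<^sub># (F - {#A#}) \<subseteq># S" by simp
  then have "has_disjoint_zero_sums (size (F - {#A#})) S"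
    using F(2) min_zero_sumD by (intro has_disjoint_zero_sumsI) (auto dest: in_diffD)
  then show ?thesis using F(1) A(1) by (simp add: size_Diff_singleton)
qed

section \<open>Extremal zero-sum sequences\<close>

lemma extremal_min_zero_sum_size_gt_2:
  assumes r: "2 \<le> r"
    and B: "seq_over r B" "zero_sum B" "\<forall>t\<in>Lset B. t \<le> kD r" "size B = Dk r (kD r)"
    and A: "min_zero_sum A" "A \<subseteq># B"
  shows "2 < size A"
proof -
  obtain B' where B': "B = A + B'" using A(2) by (metis subset_mset.le_iff_add)
  have "seq_over r B'" using B(1) B' unfolding seq_over_def by auto
  moreover have "zero_sum B'"
    using zero_sum_minus[OF B(2) _ A(2)] min_zero_sumD[OF A(1)] B' by simp
  moreover have "\<forall>t\<in>Lset B'. t \<le> kD r - 1"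
    using Suc_mem_Lset_plus[OF A(1)] B' B(3) by fastforce
  ultimately have "size B' \<le> Dk r (kD r - 1)" by (rule size_le_Dk_if_Lset_le)
  then show ?thesis using Dk_kD_jump[OF r] B(4) B' by simp
qed

lemma extremal_squarefree_zero_free:
  assumes "2 \<le> r" "seq_over r B" "zero_sum B" "\<forall>t\<in>Lset B. t \<le> kD r" "size B = Dk r (kD r)"
  shows "squarefree_seq B \<and> {} \<notin># B"
proof -
  have no_short_atom: "\<not> A \<subseteq># B" if "min_zero_sum A" "size A \<le> 2" for A
    using extremal_min_zero_sum_size_gt_2[OF assms that(1)] that(2) by auto
  have zero_free: "{} \<notin># B" using no_short_atom[OF min_zero_sum_zero] by simp
  moreover have "count B g \<le> 1" for g
  proof (rule ccontr)
    assume "\<not> count B g \<le> 1"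
    then have "{#g, g#} \<subseteq># B" by (auto simp: subseteq_mset_def)
    moreover have "g \<noteq> {}" using zero_free calculation by (auto dest: mset_subset_eqD)
    ultimately show False using no_short_atom[OF min_zero_sum_double] by simp
  qed
  ultimately show ?thesis unfolding squarefree_seq_def by blast
qed

lemma size_ge_3_if_squarefree_zero_free:
  assumes "zero_sum A" "A \<noteq> {#}" "A \<subseteq># B" "squarefree_seq B" "{} \<notin># B"
  shows "3 \<le> size A"
proof (rule ccontr)
  assume "\<not> 3 \<le> size A"
  then have "A = {#{}#} \<or> (\<exists>g. A = {#g, g#})" using assms(1,2) short_zero_sum_cases by simp
  then show False
  proof
    assume "A = {#{}#}"
    then show False using assms(3,5) by simp
  next
    assume "\<exists>g. A = {#g, g#}"
    then obtain g where "A = {#g, g#}" by blast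
    then have "2 \<le> count B g" using mset_subset_eq_count[OF assms(3), of g] by simp
    then show False
      using assms(4) unfolding squarefree_seq_def by (metis not_less_eq_eq one_add_one plus_1_eq_Suc)
  qed
qed

lemma size_le_if_squarefree_zero_free:
  assumes "seq_over r B" "squarefree_seq B" "{} \<notin># B"
  shows "size B \<le> 2 ^ r - 1"
proof -
  have "size B = card (set_mset B)" by (rule size_eq_card_set_mset_if_squarefree[OF assms(2)])
  also have "\<dots> \<le> card (C2 r - {{}})"
    using assms(1,3) unfolding seq_over_def C2_def by (intro card_mono) auto
  also have "\<dots> = 2 ^ r - 1" using card_C2[of r] by (simp add: C2_def card_Diff_singleton)
  finally show ?thesis .
qed

lemma three_mul_le_size_if_mem_Lset:
  assumes "t \<in> Lset B" "squarefree_seq B" "{} \<notin># B"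
  shows "3 * t \<le> size B"
proof -
  obtain F where F: "size F = t" "\<forall>A\<in>#F. min_zero_sum A" "\<Sum>\<^sub># F = B"
    using assms(1) unfolding Lset_def by blast
  have "\<forall>A\<in>#F. 3 \<le> size A"
  proof
    fix A assume A: "A \<in># F"
    then have "A \<subseteq># B" using F(3) by (metis mset_subset_eq_add_left sum_mset.remove)
    then show "3 \<le> size A"
      using A F(2) min_zero_sumD assms(2,3) by (blast intro: size_ge_3_if_squarefree_zero_free)
  qed
  then show ?thesis using mult_size_le_size_sum_mset[of F 3] F(1,3) by simp
qed

text \<open>A longest sequence without kD r disjoint zero-sum subsequences, completed by its sum.\<close>

lemma extremal_zero_sum_exists:
  assumes r: "2 \<le> r"
  obtains B where "seq_over r B" "zero_sum B" "\<forall>t\<in>Lset B. t \<le> kD r" "size B = Dk r (kD r)"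
proof -
  have "0 < Dk r (kD r)" using Dk_kD_jump[OF r] by simp
  then obtain S where S: "seq_over r S" "size S = Dk r (kD r) - 1"
    "\<not> has_disjoint_zero_sums (kD r) S"
    by (rule Dk_extremal_seq)
  let ?B = "add_mset (sigma S) S"
  have "\<forall>t\<in>Lset ?B. t \<le> kD r"
  proof
    fix t assume "t \<in> Lset ?B"
    then have "has_disjoint_zero_sums (t - 1) S"
      by (rule has_disjoint_zero_sums_if_mem_Lset_add_mset)
    then show "t \<le> kD r" using S(3) has_disjoint_zero_sums_le[of "t - 1" S "kD r"] by linarith
  qed
  moreover have "seq_over r ?B" "zero_sum ?B" "size ?B = Dk r (kD r)"
    using S(1,2) sigma_in_C2[OF S(1)] \<open>0 < Dk r (kD r)\<close>
    unfolding seq_over_def zero_sum_def by (auto simp: sigma_add_mset)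
  ultimately show thesis by (intro that) auto
qed

lemma extremal_Lset_ge_kD:
  assumes r: "2 \<le> r" and B: "seq_over r B" "zero_sum B" "size B = Dk r (kD r)"
  obtains t where "t \<in> Lset B" "kD r \<le> t"
proof (rule ccontr)
  assume "\<not> thesis"
  then have "\<forall>t\<in>Lset B. t \<le> kD r - 1" using that by force
  then have "size B \<le> Dk r (kD r - 1)" by (rule size_le_Dk_if_Lset_le[OF B(1,2)])
  then show False using Dk_kD_jump[OF r] B(3) by simp
qed

lemma kD_le:
  assumes r: "2 \<le> r"
  shows "kD r \<le> (2 ^ r - 1) div 3"
proof -
  obtain B where B: "seq_over r B" "zero_sum B" "\<forall>t\<in>Lset B. t \<le> kD r" "size B = Dk r (kD r)"
    by (rule extremal_zero_sum_exists[OF r])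
  then have sqf: "squarefree_seq B" and zero_free: "{} \<notin># B"
    using extremal_squarefree_zero_free[OF r] by auto
  obtain t where t: "t \<in> Lset B" "kD r \<le> t" by (rule extremal_Lset_ge_kD[OF r B(1,2,4)])
  have "3 * kD r \<le> 3 * t" using t(2) by simp
  also have "\<dots> \<le> size B" by (rule three_mul_le_size_if_mem_Lset[OF t(1) sqf zero_free])
  also have "\<dots> \<le> 2 ^ r - 1" by (rule size_le_if_squarefree_zero_free[OF B(1) sqf zero_free])
  finally show ?thesis by (simp add: less_eq_div_iff_mult_less_eq mult.commute)
qed

theorem proposition7p5:
  fixes r :: nat
  assumes "r \<ge> 2"
  shows "kD r = (LEAST k. k \<ge> 1 \<and> int (D0 r) = int (Dk r k) - 2 * int k)
    \<and> (\<forall>B. seq_over r B \<and> zero_sum B \<and> Max (Lset B) \<le> kD r \<and>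
           size B = Dk r (kD r) \<longrightarrow> squarefree_seq B \<and> {} \<notin># B)
    \<and> kD r \<le> (2 ^ r - 1) div 3"
proof (intro conjI allI impI)
  have "(\<lambda>k. k \<ge> 1 \<and> int (D0 r) = int (Dk r k) - 2 * int k)
      = (\<lambda>k. 1 \<le> k \<and> Dk r k = D0 r + 2 * k)"
    by (intro ext) linarith
  then show "kD r = (LEAST k. k \<ge> 1 \<and> int (D0 r) = int (Dk r k) - 2 * int k)"
    using kD_eq_Least[of r] assms by simp
next
  fix B assume B: "seq_over r B \<and> zero_sum B \<and> Max (Lset B) \<le> kD r \<and> size B = Dk r (kD r)"
  then have "\<forall>t\<in>Lset B. t \<le> kD r" using finite_Lset Max_ge order_trans by blast
  then show "squarefree_seq B" "{} \<notin># B"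
    using extremal_squarefree_zero_free[OF assms] B by auto
next
  show "kD r \<le> (2 ^ r - 1) div 3" by (rule kD_le[OF assms])
qed

end
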